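(* The map $\dagger:\Psi\mathfrak D\to\Psi\mathfrak D$, $\bigl(\sum_{m\le M}\sum_{k\le K}C_{km}x^k(d/dx)^m\bigr)^\dagger=\sum_{m\le M}\sum_{k\le K}C_{km}(-d/dx)^m x^k$, is a well-defined involutive antiautomorphism of $\Psi\mathfrak D$.
   Context: $\Psi\mathfrak D$ is the algebra of all formal series $\sum_{m=-\infty}^{M}\sum_{k=-\infty}^{K}C_{km}x^k(d/dx)^m$ with $C_{km}\in\mathbb C$ and integers $M,K$ depending on the series, with multiplication determined by $(d/dx)^m x^k=\sum_{j\ge0}\frac{(m)_j(k)_j}{j!}x^{k-j}(d/dx)^{m-j}$ for $m,k\in\mathbb Z$, $(a)_j=a(a-1)\cdots(a-j+1)$; the series $\sum C_{km}(-d/dx)^mx^k$ is interpreted in $\Psi\mathfrak D$ via this rule. *)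

theory Defs
  imports Complex_Main
begin

text \<open>An element of the algebra of formal pseudo-differential series is represented by its
  coefficient function C, where C k m is the coefficient of x^k (d/dx)^m (k, m integers).\<close>

type_synonym psd = "int \<Rightarrow> int \<Rightarrow> complex"

definition psd_carrier :: "psd set" where
  "psd_carrier = {C. \<exists>K M. \<forall>k m. C k m \<noteq> 0 \<longrightarrow> k \<le> K \<and> m \<le> M}"

definition ffal :: "int \<Rightarrow> nat \<Rightarrow> complex" where
  "ffal a j = (\<Prod>i<j. of_int a - of_nat i)"

text \<open>Structure constants of the rule
  (d/dx)^m x^k = sum over j of (m)_j (k)_j / j! x^(k-j) (d/dx)^(m-j).\<close>
definition psd_rule_coeff :: "int \<Rightarrow> int \<Rightarrow> nat \<Rightarrow> complex" where
  "psd_rule_coeff m k j = ffal m j * ffal k j / of_nat (fact j)"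

text \<open>Product: (x^a D^b)(x^c D^d) = x^a (D^b x^c) D^d
   = sum_j (b)_j (c)_j / j! x^(a+c-j) D^(b+d-j), extended bilinearly.
  For elements of the carrier, the index set below is finite.\<close>
definition psd_mult :: "psd \<Rightarrow> psd \<Rightarrow> psd" where
  "psd_mult A B = (\<lambda>k m.
     \<Sum>(a, b, c, d, j) \<in> {(a, b, c, d, j). A a b \<noteq> 0 \<and> B c d \<noteq> 0 \<and>
                              a + c - int j = k \<and> b + d - int j = m}.
        A a b * B c d * psd_rule_coeff b c j)"

definition psd_add :: "psd \<Rightarrow> psd \<Rightarrow> psd" where
  "psd_add A B = (\<lambda>k m. A k m + B k m)"

definition psd_smult :: "complex \<Rightarrow> psd \<Rightarrow> psd" where
  "psd_smult c A = (\<lambda>k m. c * A k m)"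

definition psd_one :: psd where
  "psd_one = (\<lambda>k m. if k = 0 \<and> m = 0 then 1 else 0)"

text \<open>The map dagger: sum C_km x^k (d/dx)^m  is sent to  sum C_km (-d/dx)^m x^k, where
  (-d/dx)^m x^k = (-1)^m (d/dx)^m x^k is expanded in the algebra via the rule above:
  C_km (-1)^m sum_j (m)_j (k)_j / j! x^(k-j) (d/dx)^(m-j).\<close>
definition psd_dagger :: "psd \<Rightarrow> psd" where
  "psd_dagger C = (\<lambda>k' m'.
     \<Sum>j \<in> {j::nat. C (k' + int j) (m' + int j) \<noteq> 0}.
        C (k' + int j) (m' + int j) * (-1) powi (m' + int j) *
        psd_rule_coeff (m' + int j) (k' + int j) j)"

end

theory Submission
  imports Defs "HOL-Computational_Algebra.Formal_Power_Series" "HOL-Library.Groups_Big_Fun"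
begin

(* Every coefficient of a product or of a dagger is a kernel applied to the coefficients of
   the arguments: the coefficient of x^k D^m in (x^a D^b)(x^c D^d) is the single structure
   constant (b)_j (c)_j / j! with j = a + c - k, and in (x^a D^b)^dagger it is
   (-1)^b (b)_j (a)_j / j! with j = a - k.  Supports bounded above make all exchanges of
   summation finite, so involutivity and dagger(AB) = dagger(B) dagger(A) reduce to identities
   between these kernels: an alternating binomial sum shows that the dagger kernel composed with
   itself is the identity, and Chu-Vandermonde convolutions match the two kernels of the
   antihomomorphism property. *)

section \<open>Falling factorials and the structure constants\<close>

definition ffact :: "'a::comm_ring_1 \<Rightarrow> nat \<Rightarrow> 'a" where
  "ffact x n = (\<Prod>i<n. x - of_nat i)"

lemma ffact_add: "ffact x (i + j) = ffact x i * ffact (x - of_nat i) j"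
  by (induction j) (simp_all add: ffact_def lessThan_Suc algebra_simps)

lemma ffact_eq_fact_gbinomial: "ffact (x::'a::field_char_0) n = fact n * (x gchoose n)"
  by (simp add: ffact_def gbinomial_mult_fact atLeast0LessThan)

lemma ffact_Vandermonde:
  fixes x y :: "'a::field_char_0"
  shows "(\<Sum>u\<le>n. of_nat (n choose u) * ffact x u * ffact y (n - u)) = ffact (x + y) n"
proof -
  have "of_nat (n choose u) * ffact x u * ffact y (n - u)
      = fact n * ((x gchoose u) * (y gchoose (n - u)))" if "u \<le> n" for u
    using that by (simp add: ffact_eq_fact_gbinomial binomial_fact field_simps)
  then have "(\<Sum>u\<le>n. of_nat (n choose u) * ffact x u * ffact y (n - u))
      = fact n * (\<Sum>u\<le>n. (x gchoose u) * (y gchoose (n - u)))"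
    by (simp add: sum_distrib_left)
  also have "\<dots> = ffact (x + y) n"
    using gbinomial_Vandermonde[of x y n] by (simp add: atMost_atLeast0 ffact_eq_fact_gbinomial)
  finally show ?thesis .
qed

lemma gbinomial_diff_alternating_sum:
  fixes c e :: "'a::field_char_0"
  shows "(e - c) gchoose q = (\<Sum>j\<le>q. (-1)^j * (c gchoose j) * ((e - of_nat j) gchoose (q - j)))"
proof -
  have summand: "(-1)^j * (c gchoose j) * ((e - of_nat j) gchoose (q - j))
      = (-1)^q * ((c gchoose j) * ((of_nat q - e - 1) gchoose (q - j)))" if "j \<le> q" for j
  proof -
    have "(e - of_nat j) gchoose (q - j) = (-1)^(q - j) * ((of_nat q - e - 1) gchoose (q - j))"
      using that gbinomial_negated_upper[of "e - of_nat j" "q - j"] by (simp add: of_nat_diff)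
    moreover have "(-1::'a)^j * (-1)^(q - j) = (-1)^q"
      using that by (simp flip: power_add)
    ultimately show ?thesis
      by (metis (no_types, lifting) mult.assoc mult.left_commute)
  qed
  have "(\<Sum>j\<le>q. (-1)^j * (c gchoose j) * ((e - of_nat j) gchoose (q - j)))
      = (-1)^q * (\<Sum>j\<le>q. (c gchoose j) * ((of_nat q - e - 1) gchoose (q - j)))"
    unfolding sum_distrib_left by (intro sum.cong refl) (simp add: summand)
  also have "\<dots> = (-1)^q * ((of_nat q - (e - c) - 1) gchoose q)"
    using gbinomial_Vandermonde[of c "of_nat q - e - 1" q]
    by (simp add: atMost_atLeast0 algebra_simps)
  also have "\<dots> = (e - c) gchoose q"
    by (rule gbinomial_negated_upper[symmetric])
  finally show ?thesis by simp
qed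

lemma sum_triangle_swap:
  fixes N :: nat
  shows "(\<Sum>q\<le>N. \<Sum>j\<le>q. f j (q - j)) = (\<Sum>j\<le>N. \<Sum>u\<le>N - j. f j u)"
proof -
  have "(\<Sum>q\<le>N. \<Sum>j\<le>q. f j (q - j)) = (\<Sum>(j, u)\<in>{(j, u). j + u \<le> N}. f j u)"
    by (rule sum.triangle_reindex_eq[symmetric])
  also have "{(j, u). j + u \<le> N} = Sigma {..N} (\<lambda>j. {..N - j})"
    by auto
  finally show ?thesis
    by (simp add: sum.Sigma)
qed

definition rule_coeff :: "'a::field_char_0 \<Rightarrow> 'a \<Rightarrow> nat \<Rightarrow> 'a" where
  "rule_coeff x y j = ffact x j * ffact y j / fact j"

lemma rule_coeff_eq_gbinomial: "rule_coeff x y j = ffact x j * (y gchoose j)"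
  by (simp add: rule_coeff_def ffact_eq_fact_gbinomial)

lemma psd_rule_coeff_eq: "psd_rule_coeff m k j = rule_coeff (of_int m) (of_int k) j"
  by (simp add: psd_rule_coeff_def rule_coeff_def ffal_def ffact_def)

lemma rule_coeff_Vandermonde:
  fixes c d e :: "'a::field_char_0"
  shows "(\<Sum>p\<le>M. rule_coeff d c p * rule_coeff (d - of_nat p) e (M - p)) = rule_coeff d (c + e) M"
proof -
  have "rule_coeff d c p * rule_coeff (d - of_nat p) e (M - p)
      = ffact d M * ((c gchoose p) * (e gchoose (M - p)))" if "p \<le> M" for p
    using that ffact_add[of d p "M - p"] by (simp add: rule_coeff_eq_gbinomial)
  then have "(\<Sum>p\<le>M. rule_coeff d c p * rule_coeff (d - of_nat p) e (M - p))
      = ffact d M * (\<Sum>p\<le>M. (c gchoose p) * (e gchoose (M - p)))"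
    by (simp add: sum_distrib_left)
  also have "\<dots> = rule_coeff d (c + e) M"
    using gbinomial_Vandermonde[of c e M] by (simp add: atMost_atLeast0 rule_coeff_eq_gbinomial)
  finally show ?thesis .
qed

lemma rule_coeff_alternating_sum:
  fixes x y :: "'a::field_char_0"
  shows "(\<Sum>j\<le>t. (-1)^j * rule_coeff x y j * rule_coeff (x - of_nat j) (y - of_nat j) (t - j))
    = (if t = 0 then 1 else 0)"
proof -
  have summand: "rule_coeff x y j * rule_coeff (x - of_nat j) (y - of_nat j) (t - j)
      = of_nat (t choose j) * rule_coeff x y t" if "j \<le> t" for j
    using that ffact_add[of x j "t - j"] ffact_add[of y j "t - j"]
    by (simp add: rule_coeff_def binomial_fact field_simps)
  have "(\<Sum>j\<le>t. (-1)^j * rule_coeff x y j * rule_coeff (x - of_nat j) (y - of_nat j) (t - j))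
      = (\<Sum>j\<le>t. (-1)^j * of_nat (t choose j)) * rule_coeff x y t"
    unfolding sum_distrib_right by (intro sum.cong refl) (simp add: summand mult.assoc)
  then show ?thesis
    by (simp add: choose_alternating_sum rule_coeff_def ffact_def)
qed

lemma rule_coeff_alternating_convolution:
  fixes a b c d :: "'a::field_char_0"
  shows "(\<Sum>j\<le>N. (-1)^j * rule_coeff b c j
            * rule_coeff (b + d - of_nat j) (a + c - of_nat j) (N - j))
    = (\<Sum>q\<le>N. rule_coeff b a q * rule_coeff d (a + c - of_nat q) (N - q))"
proof -
  define e where "e = a + c"
  define X where "X j = (-1)^j * rule_coeff b c j * ((e - of_nat j) gchoose (N - j))" for j
  define Y where
    "Y j u = of_nat ((N - j) choose u) * ffact (b - of_nat j) u * ffact d (N - j - u)" for j u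
  have expand: "rule_coeff b a q * rule_coeff d (e - of_nat q) (N - q) = (\<Sum>j\<le>q. X j * Y j (q - j))"
    if "q \<le> N" for q
  proof -
    have "X j * Y j (q - j) = ffact b q * ffact d (N - q) *
        ((-1)^j * (c gchoose j) * ((e - of_nat j) gchoose (q - j))
          * ((e - of_nat q) gchoose (N - q)))"
      if "j \<le> q" for j
    proof -
      have "((e - of_nat j) gchoose (N - j)) * of_nat ((N - j) choose (q - j))
          = ((e - of_nat j) gchoose (q - j)) * ((e - of_nat q) gchoose (N - q))"
        using gbinomial_trinomial_revision[of "q - j" "N - j" "e - of_nat j"] \<open>j \<le> q\<close> \<open>q \<le> N\<close>
        by (simp add: binomial_gbinomial of_nat_diff)
      moreover have "ffact b q = ffact b j * ffact (b - of_nat j) (q - j)"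
        using ffact_add[of b j "q - j"] \<open>j \<le> q\<close> by simp
      ultimately show ?thesis
        using \<open>j \<le> q\<close> \<open>q \<le> N\<close> by (simp add: X_def Y_def rule_coeff_eq_gbinomial mult_ac)
    qed
    then have "(\<Sum>j\<le>q. X j * Y j (q - j)) = ffact b q * ffact d (N - q) *
        ((\<Sum>j\<le>q. (-1)^j * (c gchoose j) * ((e - of_nat j) gchoose (q - j)))
          * ((e - of_nat q) gchoose (N - q)))"
      unfolding sum_distrib_left sum_distrib_right by (intro sum.cong refl) simp
    also have "\<dots> = rule_coeff b a q * rule_coeff d (e - of_nat q) (N - q)"
      by (simp add: gbinomial_diff_alternating_sum[symmetric] e_def rule_coeff_eq_gbinomial)
    finally show ?thesis ..
  qed
  have "(\<Sum>q\<le>N. rule_coeff b a q * rule_coeff d (a + c - of_nat q) (N - q))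
      = (\<Sum>q\<le>N. \<Sum>j\<le>q. X j * Y j (q - j))"
    using expand unfolding e_def by (intro sum.cong refl) simp
  also have "\<dots> = (\<Sum>j\<le>N. X j * (\<Sum>u\<le>N - j. Y j u))"
    unfolding sum_distrib_left by (rule sum_triangle_swap[where f = "\<lambda>j u. X j * Y j u"])
  also have "\<dots> = (\<Sum>j\<le>N. X j * ffact (b + d - of_nat j) (N - j))"
    using ffact_Vandermonde[of "N - _" "b - of_nat _" d]
    by (intro sum.cong refl) (simp add: Y_def algebra_simps)
  also have "\<dots> = (\<Sum>j\<le>N. (-1)^j * rule_coeff b c j
      * rule_coeff (b + d - of_nat j) (a + c - of_nat j) (N - j))"
    by (intro sum.cong refl) (simp add: X_def e_def rule_coeff_eq_gbinomial)
  finally show ?thesis ..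
qed

section \<open>Finitely supported sums\<close>

lemma Sum_any_eq_sum_reindex:
  assumes "finite S" "inj_on \<phi> S" "{x. g x \<noteq> 0} \<subseteq> \<phi> ` S" "\<And>s. s \<in> S \<Longrightarrow> g (\<phi> s) = h s"
  shows "Sum_any g = sum h S"
proof -
  have "Sum_any g = sum g (\<phi> ` S)"
    using assms by (intro Sum_any.expand_superset) auto
  also have "\<dots> = sum h S"
    using assms(2,4) by (simp add: sum.reindex)
  finally show ?thesis .
qed

lemma Sum_any_mult_Sum_any:
  fixes f :: "'a \<Rightarrow> 'r::semiring_0"
  assumes "finite {x. f x \<noteq> 0}" "finite {y. g y \<noteq> 0}"
  shows "Sum_any f * Sum_any g = Sum_any (\<lambda>(x, y). f x * g y)"
proof -
  have "Sum_any f * Sum_any g = Sum_any (\<lambda>x. f x * Sum_any g)"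
    using assms(1) by (rule Sum_any_left_distrib)
  also have "\<dots> = Sum_any (\<lambda>x. Sum_any (\<lambda>y. f x * g y))"
    using assms(2) by (simp add: Sum_any_right_distrib)
  also have "\<dots> = Sum_any (\<lambda>(x, y). f x * g y)"
    using assms by (intro Sum_any.cartesian_product[of "{x. f x \<noteq> 0} \<times> {y. g y \<noteq> 0}"]) auto
  finally show ?thesis .
qed

lemma Sum_any_kernel_compose:
  fixes F :: "'b \<Rightarrow> 'r::semiring_no_zero_divisors"
  assumes "finite {(x, y). F y * K x y * L x \<noteq> 0}"
  shows "Sum_any (\<lambda>x. Sum_any (\<lambda>y. F y * K x y) * L x)
    = Sum_any (\<lambda>y. F y * Sum_any (\<lambda>x. K x y * L x))"
proof -
  let ?S = "{(x, y). F y * K x y * L x \<noteq> 0}"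
  have "Sum_any (\<lambda>y. F y * K x y) * L x = Sum_any (\<lambda>y. F y * K x y * L x)" for x
  proof (cases "L x = 0")
    case False
    then have "{y. F y * K x y \<noteq> 0} \<subseteq> snd ` ?S"
      by (auto simp: image_iff)
    then show ?thesis
      using assms by (intro Sum_any_left_distrib) (auto intro: finite_subset)
  qed simp
  moreover have "F y * Sum_any (\<lambda>x. K x y * L x) = Sum_any (\<lambda>x. F y * K x y * L x)" for y
  proof (cases "F y = 0")
    case False
    then have "{x. K x y * L x \<noteq> 0} \<subseteq> fst ` ?S"
      by (force simp: image_iff mult.assoc)
    then show ?thesis
      using assms by (subst Sum_any_right_distrib) (auto intro: finite_subset simp: mult.assoc)
  qed simp
  moreover have "Sum_any (\<lambda>x. Sum_any (\<lambda>y. F y * K x y * L x))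
      = Sum_any (\<lambda>y. Sum_any (\<lambda>x. F y * K x y * L x))"
    using assms by (intro Sum_any.swap[of "fst ` ?S \<times> snd ` ?S"]) (auto simp: image_iff)
  ultimately show ?thesis
    by simp
qed

section \<open>The kernels of multiplication and of the dagger\<close>

(* mult_kernel k m a b c d is the coefficient of x^k D^m in (x^a D^b)(x^c D^d), and
   dagger_kernel k m a b is its coefficient in (x^a D^b)^dagger. *)
definition mult_kernel :: "int \<Rightarrow> int \<Rightarrow> int \<Rightarrow> int \<Rightarrow> int \<Rightarrow> int \<Rightarrow> complex" where
  "mult_kernel k m a b c d =
     (if a + c - k = b + d - m \<and> k \<le> a + c then psd_rule_coeff b c (nat (a + c - k)) else 0)"

definition dagger_kernel :: "int \<Rightarrow> int \<Rightarrow> int \<Rightarrow> int \<Rightarrow> complex" where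
  "dagger_kernel k m a b =
     (if a - k = b - m \<and> k \<le> a then (-1) powi b * psd_rule_coeff b a (nat (a - k)) else 0)"

lemma mult_kernel_eq:
  assumes "a + c - k = int n" "b + d - m = int n"
  shows "mult_kernel k m a b c d = rule_coeff (of_int b) (of_int c) n"
  using assms by (simp add: mult_kernel_def psd_rule_coeff_eq)

lemma dagger_kernel_eq:
  assumes "a - k = int n" "b - m = int n"
  shows "dagger_kernel k m a b = (-1) powi b * rule_coeff (of_int b) (of_int a) n"
  using assms by (simp add: dagger_kernel_def psd_rule_coeff_eq)

lemma minus_one_powi_diff_nat: "(-1::'a::field) powi (b - int j) = (-1) powi b * (-1) ^ j"
  by (simp add: power_int_diff power_int_minus_left field_simps)

lemma dagger_kernel_involutive:
  "Sum_any (\<lambda>(a', b'). dagger_kernel a' b' a b * dagger_kernel k m a' b')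
    = (if a = k \<and> b = m then 1 else 0)"
proof (cases "a - k = b - m \<and> k \<le> a")
  case True
  define t where "t = nat (a - k)"
  have t: "a - k = int t" "b - m = int t"
    using True by (simp_all add: t_def)
  have supp: "(a', b') \<in> (\<lambda>j. (a - int j, b - int j)) ` {..t}"
    if "dagger_kernel a' b' a b * dagger_kernel k m a' b' \<noteq> 0" for a' b'
  proof -
    from that have "a - a' = b - b'" "a' \<le> a" "a' - k = b' - m" "k \<le> a'"
      by (auto simp: dagger_kernel_def split: if_splits)
    with t show ?thesis
      by (intro rev_image_eqI[of "nat (a - a')"]) auto
  qed
  have summand: "dagger_kernel (a - int j) (b - int j) a b
        * dagger_kernel k m (a - int j) (b - int j)
      = (-1)^j * rule_coeff (of_int b) (of_int a) j
          * rule_coeff (of_int b - of_nat j) (of_int a - of_nat j) (t - j)"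
    if "j \<le> t" for j
  proof -
    have "a - int j - k = int (t - j)" "b - int j - m = int (t - j)"
      using t that by auto
    then show ?thesis
      by (simp add: dagger_kernel_eq minus_one_powi_diff_nat)
  qed
  have "Sum_any (\<lambda>(a', b'). dagger_kernel a' b' a b * dagger_kernel k m a' b')
      = (\<Sum>j\<le>t. (-1)^j * rule_coeff (of_int b) (of_int a) j
          * rule_coeff (of_int b - of_nat j) (of_int a - of_nat j) (t - j))"
    by (rule Sum_any_eq_sum_reindex[where \<phi> = "\<lambda>j. (a - int j, b - int j)"])
      (auto simp: inj_on_def intro: supp summand)
  also have "\<dots> = (if a = k \<and> b = m then 1 else 0)"
    using t by (simp add: rule_coeff_alternating_sum)
  finally show ?thesis .
next
  case False
  then have "(\<lambda>(a', b'). dagger_kernel a' b' a b * dagger_kernel k m a' b') = (\<lambda>_. 0)"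
    by (auto simp: dagger_kernel_def fun_eq_iff)
  with False show ?thesis
    by auto
qed

lemma dagger_kernel_of_mult_kernel:
  assumes N: "a + c - k = int N" "b + d - m = int N"
  shows "Sum_any (\<lambda>(a', b'). mult_kernel a' b' a b c d * dagger_kernel k m a' b')
    = (-1) powi (b + d) * (\<Sum>j\<le>N. (-1)^j * rule_coeff (of_int b) (of_int c) j
        * rule_coeff (of_int b + of_int d - of_nat j) (of_int a + of_int c - of_nat j) (N - j))"
proof -
  have supp: "(a', b') \<in> (\<lambda>j. (a + c - int j, b + d - int j)) ` {..N}"
    if "mult_kernel a' b' a b c d * dagger_kernel k m a' b' \<noteq> 0" for a' b'
  proof -
    from that have "a + c - a' = b + d - b'" "a' \<le> a + c" "a' - k = b' - m" "k \<le> a'"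
      by (auto simp: mult_kernel_def dagger_kernel_def split: if_splits)
    with N show ?thesis
      by (intro rev_image_eqI[of "nat (a + c - a')"]) auto
  qed
  have summand: "mult_kernel (a + c - int j) (b + d - int j) a b c d
        * dagger_kernel k m (a + c - int j) (b + d - int j)
      = (-1) powi (b + d) * ((-1)^j * rule_coeff (of_int b) (of_int c) j
          * rule_coeff (of_int b + of_int d - of_nat j) (of_int a + of_int c - of_nat j) (N - j))"
    if "j \<le> N" for j
  proof -
    have "a + c - int j - k = int (N - j)" "b + d - int j - m = int (N - j)"
      using N that by auto
    then show ?thesis
      by (simp add: mult_kernel_eq dagger_kernel_eq minus_one_powi_diff_nat)
  qed
  have "Sum_any (\<lambda>(a', b'). mult_kernel a' b' a b c d * dagger_kernel k m a' b')
      = (\<Sum>j\<le>N. (-1) powi (b + d) * ((-1)^j * rule_coeff (of_int b) (of_int c) j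
          * rule_coeff (of_int b + of_int d - of_nat j) (of_int a + of_int c - of_nat j) (N - j)))"
    by (rule Sum_any_eq_sum_reindex[where \<phi> = "\<lambda>j. (a + c - int j, b + d - int j)"])
      (auto simp: inj_on_def intro: supp summand)
  then show ?thesis
    by (simp add: sum_distrib_left)
qed

lemma mult_kernel_of_dagger_kernels:
  assumes N: "a + c - k = int N" "b + d - m = int N"
  shows "Sum_any (\<lambda>((c', d'), (a', b')).
      dagger_kernel c' d' c d * dagger_kernel a' b' a b * mult_kernel k m c' d' a' b')
    = (-1) powi (b + d) * (\<Sum>q\<le>N. rule_coeff (of_int b) (of_int a) q
        * rule_coeff (of_int d) (of_int a + of_int c - of_nat q) (N - q))"
proof -
  let ?\<phi> = "\<lambda>(q, p). ((c - int p, d - int p), (a - int q, b - int q))"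
  let ?S = "Sigma {..N} (\<lambda>q. {..N - q})"
  have supp: "((c', d'), (a', b')) \<in> ?\<phi> ` ?S"
    if "dagger_kernel c' d' c d * dagger_kernel a' b' a b * mult_kernel k m c' d' a' b' \<noteq> 0"
    for a' b' c' d'
  proof -
    from that have "c - c' = d - d'" "c' \<le> c" "a - a' = b - b'" "a' \<le> a"
        "c' + a' - k = d' + b' - m" "k \<le> c' + a'"
      by (auto simp: mult_kernel_def dagger_kernel_def split: if_splits)
    with N show ?thesis
      by (intro rev_image_eqI[of "(nat (a - a'), nat (c - c'))"]) auto
  qed
  have summand: "dagger_kernel (c - int p) (d - int p) c d
        * dagger_kernel (a - int q) (b - int q) a b
        * mult_kernel k m (c - int p) (d - int p) (a - int q) (b - int q)
      = (-1) powi (b + d) * (rule_coeff (of_int b) (of_int a) q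
        * (rule_coeff (of_int d) (of_int c) p
          * rule_coeff (of_int d - of_nat p) (of_int a - of_nat q) (N - (q + p))))"
    if "q \<le> N" "p \<le> N - q" for q p
  proof -
    have "c - int p + (a - int q) - k = int (N - (q + p))"
        "d - int p + (b - int q) - m = int (N - (q + p))"
      using N that by auto
    then show ?thesis
      by (simp add: mult_kernel_eq dagger_kernel_eq power_int_add mult_ac)
  qed
  have inner: "(\<Sum>p\<le>N - q. rule_coeff (of_int d :: complex) (of_int c) p
        * rule_coeff (of_int d - of_nat p) (of_int a - of_nat q) (N - q - p))
      = rule_coeff (of_int d) (of_int a + of_int c - of_nat q) (N - q)" for q
    using rule_coeff_Vandermonde[where M = "N - q" and d = "of_int d :: complex"
        and c = "of_int c" and e = "of_int a - of_nat q"]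
    by (simp add: algebra_simps)
  have "Sum_any (\<lambda>((c', d'), (a', b')).
      dagger_kernel c' d' c d * dagger_kernel a' b' a b * mult_kernel k m c' d' a' b')
    = (\<Sum>(q, p)\<in>?S. (-1) powi (b + d) * (rule_coeff (of_int b) (of_int a) q
        * (rule_coeff (of_int d) (of_int c) p
          * rule_coeff (of_int d - of_nat p) (of_int a - of_nat q) (N - (q + p)))))"
    by (rule Sum_any_eq_sum_reindex[where \<phi> = ?\<phi>]) (auto simp: inj_on_def intro: supp summand)
  also have "\<dots> = (\<Sum>q\<le>N. \<Sum>p\<le>N - q. (-1) powi (b + d) * (rule_coeff (of_int b) (of_int a) q
      * (rule_coeff (of_int d) (of_int c) p
        * rule_coeff (of_int d - of_nat p) (of_int a - of_nat q) (N - (q + p)))))"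
    by (simp add: sum.Sigma)
  also have "\<dots> = (-1) powi (b + d) * (\<Sum>q\<le>N. rule_coeff (of_int b) (of_int a) q
      * rule_coeff (of_int d) (of_int a + of_int c - of_nat q) (N - q))"
    by (simp add: inner[symmetric] sum_distrib_left)
  finally show ?thesis .
qed

lemma dagger_kernel_mult_kernel_antihom:
  "Sum_any (\<lambda>(a', b'). mult_kernel a' b' a b c d * dagger_kernel k m a' b')
    = Sum_any (\<lambda>((c', d'), (a', b')).
        dagger_kernel c' d' c d * dagger_kernel a' b' a b * mult_kernel k m c' d' a' b')"
proof (cases "a + c - k = b + d - m \<and> k \<le> a + c")
  case True
  define N where "N = nat (a + c - k)"
  have N: "a + c - k = int N" "b + d - m = int N"
    using True by (simp_all add: N_def)
  show ?thesis
    unfolding dagger_kernel_of_mult_kernel[OF N] mult_kernel_of_dagger_kernels[OF N]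
    using rule_coeff_alternating_convolution[where N = N and a = "of_int a :: complex"
        and b = "of_int b" and c = "of_int c" and d = "of_int d"]
    by (simp add: mult.assoc)
next
  case False
  then have "(\<lambda>(a', b'). mult_kernel a' b' a b c d * dagger_kernel k m a' b') = (\<lambda>_. 0)"
    and "(\<lambda>((c', d'), (a', b')).
        dagger_kernel c' d' c d * dagger_kernel a' b' a b * mult_kernel k m c' d' a' b')
      = (\<lambda>_. 0)"
    by (auto simp: mult_kernel_def dagger_kernel_def fun_eq_iff)
  then show ?thesis
    by simp
qed

section \<open>Supports bounded above\<close>

definition support_bounded :: "int \<Rightarrow> psd \<Rightarrow> bool" where
  "support_bounded U A \<longleftrightarrow> (\<forall>k m. A k m \<noteq> 0 \<longrightarrow> k \<le> U \<and> m \<le> U)"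

lemma support_boundedD: "support_bounded U A \<Longrightarrow> A a b \<noteq> 0 \<Longrightarrow> a \<le> U \<and> b \<le> U"
  unfolding support_bounded_def by blast

lemma support_bounded_mono: "support_bounded U A \<Longrightarrow> U \<le> V \<Longrightarrow> support_bounded V A"
  unfolding support_bounded_def by (meson order.trans)

lemma psd_carrier_iff_support_bounded: "A \<in> psd_carrier \<longleftrightarrow> (\<exists>U. support_bounded U A)"
proof
  assume "A \<in> psd_carrier"
  then obtain K M where "\<forall>k m. A k m \<noteq> 0 \<longrightarrow> k \<le> K \<and> m \<le> M"
    unfolding psd_carrier_def by blast
  then have "support_bounded (max K M) A"
    unfolding support_bounded_def by (simp add: le_max_iff_disj)
  then show "\<exists>U. support_bounded U A" ..
next
  assume "\<exists>U. support_bounded U A"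
  then show "A \<in> psd_carrier"
    unfolding psd_carrier_def support_bounded_def by blast
qed

lemma psd_carrier_common_bound:
  assumes "A \<in> psd_carrier" "B \<in> psd_carrier"
  obtains U where "0 \<le> U" "support_bounded U A" "support_bounded U B"
proof -
  obtain U\<^sub>A U\<^sub>B where "support_bounded U\<^sub>A A" "support_bounded U\<^sub>B B"
    using assms unfolding psd_carrier_iff_support_bounded by blast
  then have "support_bounded (max 0 (max U\<^sub>A U\<^sub>B)) A" "support_bounded (max 0 (max U\<^sub>A U\<^sub>B)) B"
    by (simp_all add: support_bounded_mono)
  then show ?thesis
    by (intro that[of "max 0 (max U\<^sub>A U\<^sub>B)"]) simp_all
qed

lemma finite_diagonal_support:
  assumes "A \<in> psd_carrier"
  shows "finite {j::nat. A (k + int j) (m + int j) \<noteq> 0}"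
proof -
  obtain U where "support_bounded U A"
    using assms by (auto simp: psd_carrier_iff_support_bounded)
  then have "{j. A (k + int j) (m + int j) \<noteq> 0} \<subseteq> {..nat (U - k)}"
    by (force simp: support_bounded_def)
  then show ?thesis
    by (rule finite_subset) simp
qed

lemma support_bounded_psd_dagger:
  assumes "support_bounded U A"
  shows "support_bounded U (psd_dagger A)"
  unfolding support_bounded_def
proof (intro allI impI)
  fix k m assume "psd_dagger A k m \<noteq> 0"
  then obtain j :: nat where "A (k + int j) (m + int j) \<noteq> 0"
    unfolding psd_dagger_def by (auto elim: sum.not_neutral_contains_not_neutral)
  with assms show "k \<le> U \<and> m \<le> U"
    by (force simp: support_bounded_def)
qed

lemma support_bounded_psd_mult:
  assumes "support_bounded U A" "support_bounded U B"
  shows "support_bounded (2 * U) (psd_mult A B)"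
  unfolding support_bounded_def
proof (intro allI impI)
  fix k m assume "psd_mult A B k m \<noteq> 0"
  then obtain a b c d j where "A a b \<noteq> 0" "B c d \<noteq> 0" "a + c - int j = k" "b + d - int j = m"
    unfolding psd_mult_def by (auto elim: sum.not_neutral_contains_not_neutral)
  with assms show "k \<le> 2 * U \<and> m \<le> 2 * U"
    by (force simp: support_bounded_def)
qed

lemma psd_dagger_carrier: "A \<in> psd_carrier \<Longrightarrow> psd_dagger A \<in> psd_carrier"
  by (auto simp: psd_carrier_iff_support_bounded intro: support_bounded_psd_dagger)

lemma psd_mult_carrier:
  assumes "A \<in> psd_carrier" "B \<in> psd_carrier"
  shows "psd_mult A B \<in> psd_carrier"
proof -
  obtain U where "support_bounded U A" "support_bounded U B"
    using assms by (rule psd_carrier_common_bound)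
  then show ?thesis
    unfolding psd_carrier_iff_support_bounded by (blast intro: support_bounded_psd_mult)
qed

lemma psd_add_carrier:
  assumes "A \<in> psd_carrier" "B \<in> psd_carrier"
  shows "psd_add A B \<in> psd_carrier"
proof -
  obtain U where "support_bounded U A" "support_bounded U B"
    using assms by (rule psd_carrier_common_bound)
  then have "support_bounded U (psd_add A B)"
    unfolding support_bounded_def psd_add_def by (metis add.left_neutral add.right_neutral)
  then show ?thesis
    unfolding psd_carrier_iff_support_bounded by blast
qed

lemma psd_smult_carrier:
  assumes "A \<in> psd_carrier"
  shows "psd_smult c A \<in> psd_carrier"
proof -
  obtain U where "support_bounded U A"
    using assms unfolding psd_carrier_iff_support_bounded by blast
  then have "support_bounded U (psd_smult c A)"
    unfolding support_bounded_def psd_smult_def by auto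
  then show ?thesis
    unfolding psd_carrier_iff_support_bounded by blast
qed

lemma psd_one_carrier: "psd_one \<in> psd_carrier"
proof -
  have "support_bounded 0 psd_one"
    unfolding support_bounded_def psd_one_def by simp
  then show ?thesis
    unfolding psd_carrier_iff_support_bounded by blast
qed

section \<open>Kernel representation of the operations\<close>

lemma psd_dagger_eq_Sum_any:
  assumes "A \<in> psd_carrier"
  shows "psd_dagger A k m = Sum_any (\<lambda>(a, b). A a b * dagger_kernel k m a b)"
proof -
  have supp: "(a, b) \<in> (\<lambda>j. (k + int j, m + int j)) ` {j. A (k + int j) (m + int j) \<noteq> 0}"
    if "A a b * dagger_kernel k m a b \<noteq> 0" for a b
  proof -
    from that have "A a b \<noteq> 0" "b = m + (a - k)" "k \<le> a"
      by (auto simp: dagger_kernel_def split: if_splits)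
    then show ?thesis
      by (intro rev_image_eqI[of "nat (a - k)"]) auto
  qed
  show ?thesis
    unfolding psd_dagger_def
    by (rule sym, rule Sum_any_eq_sum_reindex[where \<phi> = "\<lambda>j. (k + int j, m + int j)"])
      (auto simp: finite_diagonal_support[OF assms] inj_on_def dagger_kernel_def intro: supp)
qed

lemma finite_dagger_kernel_support:
  assumes "A \<in> psd_carrier"
  shows "finite {(a, b). A a b * dagger_kernel k m a b \<noteq> 0}"
proof -
  obtain U where U: "support_bounded U A"
    using assms unfolding psd_carrier_iff_support_bounded by blast
  have "{(a, b). A a b * dagger_kernel k m a b \<noteq> 0} \<subseteq> {k..U} \<times> {m..U}"
    by (auto simp: dagger_kernel_def split: if_splits dest: support_boundedD[OF U])
  then show ?thesis
    by (rule finite_subset) simp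
qed

lemma psd_mult_eq_Sum_any:
  assumes "A \<in> psd_carrier" "B \<in> psd_carrier"
  shows "psd_mult A B k m = Sum_any (\<lambda>((a, b), (c, d)). A a b * B c d * mult_kernel k m a b c d)"
proof -
  obtain U where U: "support_bounded U A" "support_bounded U B"
    using assms by (rule psd_carrier_common_bound)
  let ?M = "{(a, b, c, d, j). A a b \<noteq> 0 \<and> B c d \<noteq> 0 \<and> a + c - int j = k \<and> b + d - int j = m}"
  let ?\<phi> = "\<lambda>(a, b, c, d, j::nat). ((a, b), (c, d))"
  let ?g = "\<lambda>((a, b), (c, d)). A a b * B c d * mult_kernel k m a b c d"
  have "?M \<subseteq> {k - U..U} \<times> {m - U..U} \<times> {k - U..U} \<times> {m - U..U} \<times> {..nat (2 * U - k)}"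
    using U by (force simp: support_bounded_def)
  then have fin: "finite ?M"
    by (rule finite_subset) simp
  have inj: "inj_on ?\<phi> ?M"
    by (auto simp: inj_on_def)
  have supp: "{x. ?g x \<noteq> 0} \<subseteq> ?\<phi> ` ?M"
  proof clarify
    fix a b c d assume "A a b * B c d * mult_kernel k m a b c d \<noteq> 0"
    then have "A a b \<noteq> 0" "B c d \<noteq> 0" "a + c - k = b + d - m" "k \<le> a + c"
      by (auto simp: mult_kernel_def split: if_splits)
    then show "((a, b), (c, d)) \<in> ?\<phi> ` ?M"
      by (intro rev_image_eqI[of "(a, b, c, d, nat (a + c - k))"]) auto
  qed
  show ?thesis
    unfolding psd_mult_def
    by (rule sym, rule Sum_any_eq_sum_reindex[OF fin inj supp]) (auto simp: mult_kernel_def)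
qed

lemma psd_dagger_psd_dagger_eq_Sum_any:
  assumes "A \<in> psd_carrier"
  shows "psd_dagger (psd_dagger A) k m
    = Sum_any (\<lambda>(a, b). A a b
        * Sum_any (\<lambda>(a', b'). dagger_kernel a' b' a b * dagger_kernel k m a' b'))"
proof -
  obtain U where U: "support_bounded U A"
    using assms unfolding psd_carrier_iff_support_bounded by blast
  let ?F = "\<lambda>(a, b). A a b"
  let ?K = "\<lambda>(a', b') (a, b). dagger_kernel a' b' a b"
  let ?L = "\<lambda>(a', b'). dagger_kernel k m a' b'"
  let ?I = "{min k m..U}"
  have "{(x, y). ?F y * ?K x y * ?L x \<noteq> 0} \<subseteq> (?I \<times> ?I) \<times> (?I \<times> ?I)"
    by (auto simp: dagger_kernel_def split: if_splits dest: support_boundedD[OF U])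
  then have fin: "finite {(x, y). ?F y * ?K x y * ?L x \<noteq> 0}"
    by (rule finite_subset) simp
  have "psd_dagger (psd_dagger A) k m
      = Sum_any (\<lambda>(a', b'). psd_dagger A a' b' * dagger_kernel k m a' b')"
    by (rule psd_dagger_eq_Sum_any[OF psd_dagger_carrier[OF assms]])
  also have "\<dots> = Sum_any (\<lambda>x. Sum_any (\<lambda>y. ?F y * ?K x y) * ?L x)"
    by (simp add: psd_dagger_eq_Sum_any[OF assms] split_def)
  also have "\<dots> = Sum_any (\<lambda>y. ?F y * Sum_any (\<lambda>x. ?K x y * ?L x))"
    by (rule Sum_any_kernel_compose[OF fin])
  finally show ?thesis
    by (simp add: split_def)
qed

lemma psd_dagger_psd_mult_eq_Sum_any:
  assumes "A \<in> psd_carrier" "B \<in> psd_carrier"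
  shows "psd_dagger (psd_mult A B) k m
    = Sum_any (\<lambda>((a, b), (c, d)). A a b * B c d
        * Sum_any (\<lambda>(a', b'). mult_kernel a' b' a b c d * dagger_kernel k m a' b'))"
proof -
  obtain U where U: "0 \<le> U" "support_bounded U A" "support_bounded U B"
    using assms by (rule psd_carrier_common_bound)
  let ?F = "\<lambda>((a, b), (c, d)). A a b * B c d"
  let ?K = "\<lambda>(a', b') ((a, b), (c, d)). mult_kernel a' b' a b c d"
  let ?L = "\<lambda>(a', b'). dagger_kernel k m a' b'"
  let ?I = "{min k m - U..2 * U}"
  have "{(x, y). ?F y * ?K x y * ?L x \<noteq> 0} \<subseteq> (?I \<times> ?I) \<times> ((?I \<times> ?I) \<times> (?I \<times> ?I))"
    using U(1) by (auto simp: dagger_kernel_def mult_kernel_def min_def split: if_splits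
        dest!: support_boundedD[OF U(2)] support_boundedD[OF U(3)])
  then have fin: "finite {(x, y). ?F y * ?K x y * ?L x \<noteq> 0}"
    by (rule finite_subset) simp
  have "psd_dagger (psd_mult A B) k m
      = Sum_any (\<lambda>(a', b'). psd_mult A B a' b' * dagger_kernel k m a' b')"
    by (rule psd_dagger_eq_Sum_any[OF psd_mult_carrier[OF assms]])
  also have "\<dots> = Sum_any (\<lambda>x. Sum_any (\<lambda>y. ?F y * ?K x y) * ?L x)"
    by (simp add: psd_mult_eq_Sum_any[OF assms] split_def)
  also have "\<dots> = Sum_any (\<lambda>y. ?F y * Sum_any (\<lambda>x. ?K x y * ?L x))"
    by (rule Sum_any_kernel_compose[OF fin])
  finally show ?thesis
    by (simp add: split_def)
qed

lemma psd_mult_psd_dagger_eq_Sum_any: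
  assumes "A \<in> psd_carrier" "B \<in> psd_carrier"
  shows "psd_mult (psd_dagger B) (psd_dagger A) k m
    = Sum_any (\<lambda>((a, b), (c, d)). A a b * B c d
        * Sum_any (\<lambda>((c', d'), (a', b')).
            dagger_kernel c' d' c d * dagger_kernel a' b' a b * mult_kernel k m c' d' a' b'))"
proof -
  obtain U where U: "0 \<le> U" "support_bounded U A" "support_bounded U B"
    using assms by (rule psd_carrier_common_bound)
  let ?F = "\<lambda>((a, b), (c, d)). A a b * B c d"
  let ?K = "\<lambda>((c', d'), (a', b')) ((a, b), (c, d)).
    dagger_kernel c' d' c d * dagger_kernel a' b' a b"
  let ?L = "\<lambda>((c', d'), (a', b')). mult_kernel k m c' d' a' b'"
  let ?I = "{min k m - U..U}"
  have "{(x, y). ?F y * ?K x y * ?L x \<noteq> 0}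
      \<subseteq> ((?I \<times> ?I) \<times> (?I \<times> ?I)) \<times> ((?I \<times> ?I) \<times> (?I \<times> ?I))"
    using U(1) by (auto simp: dagger_kernel_def mult_kernel_def min_def split: if_splits
        dest!: support_boundedD[OF U(2)] support_boundedD[OF U(3)])
  then have fin: "finite {(x, y). ?F y * ?K x y * ?L x \<noteq> 0}"
    by (rule finite_subset) simp
  have product: "psd_dagger B c' d' * psd_dagger A a' b'
      = Sum_any (\<lambda>y. ?F y * ?K ((c', d'), (a', b')) y)" for a' b' c' d'
  proof -
    have "psd_dagger A a' b' * psd_dagger B c' d'
        = Sum_any (\<lambda>((a, b), (c, d)).
            A a b * dagger_kernel a' b' a b * (B c d * dagger_kernel c' d' c d))"
      unfolding psd_dagger_eq_Sum_any[OF assms(1)] psd_dagger_eq_Sum_any[OF assms(2)]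
      using finite_dagger_kernel_support[OF assms(1)] finite_dagger_kernel_support[OF assms(2)]
      by (subst Sum_any_mult_Sum_any) (simp_all add: split_def)
    then show ?thesis
      by (simp add: split_def mult_ac)
  qed
  have "psd_mult (psd_dagger B) (psd_dagger A) k m
      = Sum_any (\<lambda>((c', d'), (a', b')).
          psd_dagger B c' d' * psd_dagger A a' b' * mult_kernel k m c' d' a' b')"
    using psd_dagger_carrier[OF assms(2)] psd_dagger_carrier[OF assms(1)]
    by (rule psd_mult_eq_Sum_any)
  also have "\<dots> = Sum_any (\<lambda>x. Sum_any (\<lambda>y. ?F y * ?K x y) * ?L x)"
    by (simp add: product split_def)
  also have "\<dots> = Sum_any (\<lambda>y. ?F y * Sum_any (\<lambda>x. ?K x y * ?L x))"
    by (rule Sum_any_kernel_compose[OF fin])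
  finally show ?thesis
    by (simp add: split_def)
qed

lemma psd_dagger_involutive:
  assumes "A \<in> psd_carrier"
  shows "psd_dagger (psd_dagger A) = A"
proof (intro ext)
  fix k m
  have "psd_dagger (psd_dagger A) k m = Sum_any (\<lambda>x. if x = (k, m) then A k m else 0)"
    unfolding psd_dagger_psd_dagger_eq_Sum_any[OF assms] dagger_kernel_involutive
    by (rule Sum_any.cong) (auto split: if_splits)
  then show "psd_dagger (psd_dagger A) k m = A k m"
    by simp
qed

lemma psd_dagger_mult:
  assumes "A \<in> psd_carrier" "B \<in> psd_carrier"
  shows "psd_dagger (psd_mult A B) = psd_mult (psd_dagger B) (psd_dagger A)"
  by (intro ext) (simp add: psd_dagger_psd_mult_eq_Sum_any[OF assms]
      psd_mult_psd_dagger_eq_Sum_any[OF assms] dagger_kernel_mult_kernel_antihom)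

lemma psd_dagger_add:
  assumes "A \<in> psd_carrier" "B \<in> psd_carrier"
  shows "psd_dagger (psd_add A B) = psd_add (psd_dagger A) (psd_dagger B)"
proof (intro ext)
  fix k m
  have "psd_dagger (psd_add A B) k m
      = Sum_any (\<lambda>(a, b). A a b * dagger_kernel k m a b + B a b * dagger_kernel k m a b)"
    by (simp only: psd_dagger_eq_Sum_any[OF psd_add_carrier[OF assms]])
      (simp add: psd_add_def distrib_right)
  also have "\<dots> = psd_dagger A k m + psd_dagger B k m"
    using finite_dagger_kernel_support[OF assms(1)] finite_dagger_kernel_support[OF assms(2)]
    by (simp add: psd_dagger_eq_Sum_any assms Sum_any.distrib split_def)
  finally show "psd_dagger (psd_add A B) k m = psd_add (psd_dagger A) (psd_dagger B) k m"
    by (simp add: psd_add_def)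
qed

lemma psd_dagger_smult:
  assumes "A \<in> psd_carrier"
  shows "psd_dagger (psd_smult c A) = psd_smult c (psd_dagger A)"
proof (intro ext)
  fix k m
  have "psd_dagger (psd_smult c A) k m = Sum_any (\<lambda>(a, b). c * (A a b * dagger_kernel k m a b))"
    by (simp only: psd_dagger_eq_Sum_any[OF psd_smult_carrier[OF assms]])
      (simp add: psd_smult_def mult.assoc)
  also have "\<dots> = c * psd_dagger A k m"
    using finite_dagger_kernel_support[OF assms]
    by (simp add: psd_dagger_eq_Sum_any[OF assms] Sum_any_right_distrib split_def)
  finally show "psd_dagger (psd_smult c A) k m = psd_smult c (psd_dagger A) k m"
    by (simp add: psd_smult_def)
qed

lemma psd_dagger_one: "psd_dagger psd_one = psd_one"
proof (intro ext)
  fix k m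
  have "psd_dagger psd_one k m
      = Sum_any (\<lambda>x. if x = (0::int, 0::int) then dagger_kernel k m 0 0 else 0)"
    unfolding psd_dagger_eq_Sum_any[OF psd_one_carrier]
    by (rule Sum_any.cong) (auto simp: psd_one_def split: if_splits)
  then show "psd_dagger psd_one k m = psd_one k m"
    by (simp add: dagger_kernel_def psd_one_def psd_rule_coeff_def ffal_def)
qed

theorem lemma2p3:
  shows "(\<forall>A \<in> psd_carrier. \<forall>k m. finite {j::nat. A (k + int j) (m + int j) \<noteq> 0})
    \<and> (\<forall>A \<in> psd_carrier. psd_dagger A \<in> psd_carrier)
    \<and> (\<forall>A \<in> psd_carrier. psd_dagger (psd_dagger A) = A)
    \<and> (\<forall>A \<in> psd_carrier. \<forall>B \<in> psd_carrier.
          psd_dagger (psd_mult A B) = psd_mult (psd_dagger B) (psd_dagger A))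
    \<and> (\<forall>A \<in> psd_carrier. \<forall>B \<in> psd_carrier.
          psd_dagger (psd_add A B) = psd_add (psd_dagger A) (psd_dagger B))
    \<and> (\<forall>c. \<forall>A \<in> psd_carrier. psd_dagger (psd_smult c A) = psd_smult c (psd_dagger A))
    \<and> psd_dagger psd_one = psd_one
    \<and> bij_betw psd_dagger psd_carrier psd_carrier"
  by (auto simp: finite_diagonal_support psd_dagger_carrier psd_dagger_involutive psd_dagger_mult
      psd_dagger_add psd_dagger_smult psd_dagger_one
      intro!: bij_betw_byWitness[where f' = psd_dagger])

end
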